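(* Let $p$ be a prime and $k$ a field of characteristic $p$. For any $x,y\in X$ and any monomials $u_1,\ldots,u_p$ of $k_0\langle X\rangle$, the coefficient of $(xy)^p$ in $S_p(u_1,\ldots,u_p)$ plus the coefficient of $(yx)^p$ in $S_p(u_1,\ldots,u_p)$ equals $0$.
   Context: $k_0\langle X\rangle$ is the free associative $k$-algebra (without identity) on a countably infinite set $X$; its monomials are the nonempty words in $X$, which form a $k$-basis. $S_p(v_1,\ldots,v_p)=\sum_{\sigma\in\Sigma_p}\prod_{i=1}^p v_{\sigma(i)}$, with $\Sigma_p$ the symmetric group on $p$ letters. *)

theory Defs
  imports "HOL-Computational_Algebra.Primes" "HOL-Library.Countable_Set" "HOL-Combinatorics.Permutations"
begin

text \<open>Elements of the free associative algebra k_0<X> are represented as functions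
  from words (lists over X) to k; a genuine element has finite support contained in the
  nonempty words.\<close>

type_synonym ('x, 'k) falg = "'x list \<Rightarrow> 'k"

definition falg_mult :: "('x, 'k::semiring_0) falg \<Rightarrow> ('x, 'k) falg \<Rightarrow> ('x, 'k) falg"
  (infixl "**" 70) where
  "f ** g = (\<lambda>w. \<Sum>i\<le>length w. f (take i w) * g (drop i w))"

definition monom_w :: "'x list \<Rightarrow> ('x, 'k::{zero,one}) falg" where
  "monom_w u = (\<lambda>w. if w = u then 1 else 0)"

fun falg_prod :: "('x, 'k::semiring_0) falg list \<Rightarrow> ('x, 'k) falg" where
  "falg_prod [] = (\<lambda>_. 0)"
| "falg_prod [f] = f"
| "falg_prod (f # g # fs) = f ** falg_prod (g # fs)"

text \<open>S_p(v_1,...,v_p) = sum over sigma in Sigma_p of v_sigma(1) ... v_sigma(p);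
  arguments indexed by 0..p-1.\<close>
definition S_poly :: "nat \<Rightarrow> (nat \<Rightarrow> ('x, 'k::semiring_0) falg) \<Rightarrow> ('x, 'k) falg" where
  "S_poly p v = (\<lambda>w. \<Sum>\<sigma>\<in>{\<sigma>. \<sigma> permutes {..<p}}. falg_prod (map (\<lambda>i. v (\<sigma> i)) [0..<p]) w)"

end

theory Submission
  imports Defs
begin

text \<open>Since the $u_i$ are monomials, the coefficient of a word $w$ in $S_p(u_1,\dots,u_p)$ is the
  number of permutations $\sigma$ with $u_{\sigma(1)}\cdots u_{\sigma(p)} = w$. Precomposing
  $\sigma$ with the cyclic shift $i \mapsto i+1 \bmod p$ rotates the word $u_{\sigma(1)}\cdots
  u_{\sigma(p)}$, and it generates a free action of $\mathbb{Z}/p$ on permutations. As the set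
  $\{(xy)^p, (yx)^p\}$ is closed under rotation, the permutations producing one of these two
  words form a union of orbits of size $p$, so the two coefficients add up to a multiple of $p$,
  which vanishes in characteristic $p$.\<close>

lemma falg_mult_monom_w:
  fixes a b :: "'x list"
  shows "monom_w a ** monom_w b = (monom_w (a @ b) :: ('x, 'k::semiring_1) falg)"
proof
  fix w :: "'x list"
  have "(monom_w a ** monom_w b :: ('x, 'k) falg) w =
      (\<Sum>i\<le>length w. if i = length a \<and> w = a @ b then (1::'k) else 0)"
    unfolding falg_mult_def monom_w_def
    by (rule sum.cong) (auto simp: min_def)
  also have "\<dots> = monom_w (a @ b) w"
    by (auto simp: monom_w_def)
  finally show "(monom_w a ** monom_w b :: ('x, 'k) falg) w = monom_w (a @ b) w" .
qed

lemma falg_prod_map_monom_w: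
  fixes ws :: "'x list list"
  shows "ws \<noteq> [] \<Longrightarrow>
    falg_prod (map monom_w ws) = (monom_w (concat ws) :: ('x, 'k::semiring_1) falg)"
  by (induction ws rule: induct_list012) (auto simp: falg_mult_monom_w)

definition perm_word :: "nat \<Rightarrow> (nat \<Rightarrow> 'x list) \<Rightarrow> (nat \<Rightarrow> nat) \<Rightarrow> 'x list" where
  "perm_word p u \<sigma> = concat (map (\<lambda>i. u (\<sigma> i)) [0..<p])"

lemma S_poly_monom_w_coeff:
  fixes u :: "nat \<Rightarrow> 'x list"
  assumes "p > 0"
  shows "S_poly p (\<lambda>i. monom_w (u i) :: ('x, 'k) falg) w
     = (of_nat (card {\<sigma>. \<sigma> permutes {..<p} \<and> perm_word p u \<sigma> = w}) :: 'k::semiring_1)"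
proof -
  have "S_poly p (\<lambda>i. monom_w (u i) :: ('x, 'k) falg) w =
     (\<Sum>\<sigma>\<in>{\<sigma>. \<sigma> permutes {..<p}}. if perm_word p u \<sigma> = w then 1 else (0::'k))"
    unfolding S_poly_def
  proof (rule sum.cong[OF refl])
    fix \<sigma> :: "nat \<Rightarrow> nat"
    have "falg_prod (map (\<lambda>i. monom_w (u (\<sigma> i)) :: ('x, 'k) falg) [0..<p])
        = monom_w (perm_word p u \<sigma>)"
      using assms falg_prod_map_monom_w[of "map (\<lambda>i. u (\<sigma> i)) [0..<p]"]
      by (simp add: comp_def perm_word_def)
    then show "falg_prod (map (\<lambda>i. monom_w (u (\<sigma> i)) :: ('x, 'k) falg) [0..<p]) w =
        (if perm_word p u \<sigma> = w then 1 else (0::'k))"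
      by (auto simp: monom_w_def)
  qed
  also have "\<dots> = of_nat (card {\<sigma>. \<sigma> permutes {..<p} \<and> perm_word p u \<sigma> = w})"
    by (simp add: sum.If_cases finite_permutations Int_def conj_commute)
  finally show ?thesis .
qed

definition cyclic_shift :: "nat \<Rightarrow> nat \<Rightarrow> nat" where
  "cyclic_shift p i = (if i < p then Suc i mod p else i)"

lemma funpow_cyclic_shift: "(cyclic_shift p ^^ k) i = (if i < p then (i + k) mod p else i)"
  by (induction k) (auto simp: cyclic_shift_def mod_Suc_eq)

lemma cyclic_shift_permutes:
  assumes "p > 0"
  shows "cyclic_shift p permutes {..<p}"
proof -
  have "cyclic_shift p ^^ p = id"
    by (rule ext) (simp add: funpow_cyclic_shift)
  then have "cyclic_shift p ^^ (p - 1) \<circ> cyclic_shift p = id"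
    and "cyclic_shift p \<circ> cyclic_shift p ^^ (p - 1) = id"
    using assms funpow_Suc_right[of "p - 1" "cyclic_shift p"]
      funpow.simps(2)[of "p - 1" "cyclic_shift p"]
    by simp_all
  then have "bij (cyclic_shift p)"
    by (rule o_bij)
  then show ?thesis
    by (auto simp: permutes_def bij_iff cyclic_shift_def)
qed

lemma map_cyclic_shift_upt: "map (cyclic_shift p) [0..<p] = rotate1 [0..<p]"
proof (cases p)
  case (Suc q)
  have "map (cyclic_shift p) [0..<p] = map (cyclic_shift p) [0..<q] @ [cyclic_shift p q]"
    by (simp add: Suc)
  also have "map (cyclic_shift p) [0..<q] = map Suc [0..<q]"
    using Suc by (auto simp: cyclic_shift_def)
  also have "cyclic_shift p q = 0"
    using Suc by (simp add: cyclic_shift_def)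
  finally show ?thesis
    by (simp add: Suc upt_conv_Cons map_Suc_upt)
qed simp

lemma concat_rotate1: "concat (rotate1 ws) = rotate (length (hd ws)) (concat ws)"
  by (cases ws) (simp_all add: rotate_append)

lemma perm_word_comp_cyclic_shift:
  assumes "p > 0"
  shows "perm_word p u (\<sigma> \<circ> cyclic_shift p) = rotate (length (u (\<sigma> 0))) (perm_word p u \<sigma>)"
proof -
  have "map (\<lambda>i. u ((\<sigma> \<circ> cyclic_shift p) i)) [0..<p] = rotate1 (map (\<lambda>i. u (\<sigma> i)) [0..<p])"
    by (simp add: map_cyclic_shift_upt[symmetric] rotate1_map)
  then show ?thesis
    using assms by (simp add: perm_word_def concat_rotate1 hd_map)
qed

lemma dvd_card_if_free_periodic:
  fixes f :: "'a \<Rightarrow> 'a"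
  assumes "finite B" and "n > 0"
    and closed: "\<And>x. x \<in> B \<Longrightarrow> f x \<in> B"
    and periodic: "\<And>x. x \<in> B \<Longrightarrow> (f ^^ n) x = x"
    and free: "\<And>x. x \<in> B \<Longrightarrow> inj_on (\<lambda>k. (f ^^ k) x) {..<n}"
  shows "n dvd card B"
proof -
  define orb where "orb x = (\<lambda>k. (f ^^ k) x) ` {..<n}" for x
  have orb_eq_range: "orb x = range (\<lambda>k. (f ^^ k) x)" if "x \<in> B" for x
    unfolding orb_def using \<open>n > 0\<close> funpow_mod_eq[OF periodic[OF that]]
    by (auto intro!: image_eqI[where x = "k mod n" for k])
  have funpow_closed: "(f ^^ k) x \<in> B" if "x \<in> B" for x k
    by (induction k) (simp_all add: that closed)
  have orb_subset: "orb x \<subseteq> B" if "x \<in> B" for x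
    using funpow_closed[OF that] by (auto simp: orb_def)
  have self_in_orb: "x \<in> orb x" for x
    unfolding orb_def using \<open>n > 0\<close> by (auto intro!: image_eqI[of _ _ 0])
  have orb_eqI: "orb y = orb x" if "x \<in> B" "y \<in> orb x" for x y
  proof -
    obtain j where y: "y = (f ^^ j) x" using \<open>y \<in> orb x\<close> by (auto simp: orb_def)
    have "y \<in> B" using orb_subset[OF \<open>x \<in> B\<close>] \<open>y \<in> orb x\<close> by blast
    have "y = (f ^^ (j mod n)) x"
      using y funpow_mod_eq[OF periodic[OF \<open>x \<in> B\<close>]] by simp
    then have x_from_y: "x = (f ^^ (n - j mod n)) y"
      using \<open>n > 0\<close> periodic[OF \<open>x \<in> B\<close>] funpow_add[of "n - j mod n" "j mod n" f]
      by simp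
    have "(f ^^ k) y \<in> range (\<lambda>k. (f ^^ k) x)" for k
      using funpow_add[of k j f] by (auto simp: y intro: range_eqI[of _ _ "k + j"])
    moreover have "(f ^^ k) x \<in> range (\<lambda>k. (f ^^ k) y)" for k
      using funpow_add[of k "n - j mod n" f] x_from_y
      by (auto intro: range_eqI[of _ _ "k + (n - j mod n)"])
    ultimately show ?thesis
      using orb_eq_range \<open>x \<in> B\<close> \<open>y \<in> B\<close> by auto
  qed
  have "n * card (orb ` B) = card (\<Union> (orb ` B))"
  proof (rule card_partition)
    show "finite (orb ` B)" using \<open>finite B\<close> by simp
    show "finite (\<Union> (orb ` B))" using \<open>finite B\<close> orb_subset by (auto intro: finite_subset)
    show "card c = n" if "c \<in> orb ` B" for c
      using that free by (auto simp: orb_def card_image)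
    show "c1 \<inter> c2 = {}" if "c1 \<in> orb ` B" "c2 \<in> orb ` B" "c1 \<noteq> c2" for c1 c2
      using that orb_eqI orb_subset by blast
  qed
  moreover have "\<Union> (orb ` B) = B"
    using orb_subset self_in_orb by blast
  ultimately show ?thesis
    by (metis dvd_triv_left)
qed

lemma funpow_comp_right:
  fixes g :: "'a \<Rightarrow> 'a" and \<sigma> :: "'a \<Rightarrow> 'b"
  shows "((\<lambda>\<tau>. \<tau> \<circ> g) ^^ k) \<sigma> = \<sigma> \<circ> g ^^ k"
  by (induction k) (auto simp: fun_eq_iff funpow_swap1)

lemma dvd_card_perm_word_mem:
  assumes "p > 0" and rotate_closed: "\<And>w n. w \<in> W \<Longrightarrow> rotate n w \<in> W"
  shows "p dvd card {\<sigma>. \<sigma> permutes {..<p} \<and> perm_word p u \<sigma> \<in> W}"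
proof (rule dvd_card_if_free_periodic[where f = "\<lambda>\<tau>. \<tau> \<circ> cyclic_shift p"])
  let ?B = "{\<sigma>. \<sigma> permutes {..<p} \<and> perm_word p u \<sigma> \<in> W}"
  show "finite ?B"
    by (rule finite_subset[OF _ finite_permutations[of "{..<p}"]]) auto
  show "\<sigma> \<circ> cyclic_shift p \<in> ?B" if "\<sigma> \<in> ?B" for \<sigma>
    using that permutes_compose[OF cyclic_shift_permutes[OF \<open>p > 0\<close>]]
    by (auto simp: perm_word_comp_cyclic_shift[OF \<open>p > 0\<close>] rotate_closed)
  show "((\<lambda>\<tau>. \<tau> \<circ> cyclic_shift p) ^^ p) \<sigma> = \<sigma>" for \<sigma> :: "nat \<Rightarrow> nat"
    by (auto simp: funpow_comp_right funpow_cyclic_shift)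
  show "inj_on (\<lambda>k. ((\<lambda>\<tau>. \<tau> \<circ> cyclic_shift p) ^^ k) \<sigma>) {..<p}" if "\<sigma> \<in> ?B" for \<sigma>
  proof (rule inj_onI)
    fix a b assume "a \<in> {..<p}" "b \<in> {..<p}"
      and "((\<lambda>\<tau>. \<tau> \<circ> cyclic_shift p) ^^ a) \<sigma> = ((\<lambda>\<tau>. \<tau> \<circ> cyclic_shift p) ^^ b) \<sigma>"
    moreover have "inj \<sigma>"
      using that permutes_inj by blast
    ultimately have "(cyclic_shift p ^^ a) 0 = (cyclic_shift p ^^ b) 0"
      by (simp add: funpow_comp_right fun_eq_iff inj_eq)
    then show "a = b"
      using \<open>a \<in> {..<p}\<close> \<open>b \<in> {..<p}\<close> \<open>p > 0\<close> by (simp add: funpow_cyclic_shift)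
  qed
qed (use \<open>p > 0\<close> in simp)

lemma rotate_concat_replicate_pair:
  assumes "p > 0"
  shows "rotate n (concat (replicate p [x, y]))
    \<in> {concat (replicate p [x, y]), concat (replicate p [y, x])}"
proof -
  have "concat (replicate q [x, y]) @ [x] = x # concat (replicate q [y, x])" for q and x y :: 'a
    by (induction q) auto
  then have "rotate1 (concat (replicate p [x, y])) = concat (replicate p [y, x])" for x y :: 'a
    using assms by (cases p) simp_all
  then show ?thesis
    by (induction n) auto
qed

theorem lemma5p1:
  fixes p :: nat and x y :: 'x and u :: "nat \<Rightarrow> 'x list"
  assumes "prime p"
    and "CHAR('k::field) = p"
    and "countable (UNIV :: 'x set)" and "infinite (UNIV :: 'x set)"
    and "\<And>i. i < p \<Longrightarrow> u i \<noteq> []"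
  shows "S_poly p (\<lambda>i. (monom_w (u i) :: ('x, 'k) falg)) (concat (replicate p [x, y]))
       + S_poly p (\<lambda>i. (monom_w (u i) :: ('x, 'k) falg)) (concat (replicate p [y, x])) = 0"
proof -
  have "p > 0"
    using \<open>prime p\<close> prime_gt_0_nat by blast
  define W1 where "W1 = concat (replicate p [x, y])"
  define W2 where "W2 = concat (replicate p [y, x])"
  define perms_to where "perms_to W = {\<sigma>. \<sigma> permutes {..<p} \<and> perm_word p u \<sigma> \<in> W}" for W
  have finite_perms_to: "finite (perms_to W)" for W
    by (rule finite_subset[OF _ finite_permutations[of "{..<p}"]]) (auto simp: perms_to_def)
  have "p dvd card (perms_to {W1, W2})"
    unfolding perms_to_def W1_def W2_def
    using rotate_concat_replicate_pair[OF \<open>p > 0\<close>, of _ x y]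
      rotate_concat_replicate_pair[OF \<open>p > 0\<close>, of _ y x]
    by (intro dvd_card_perm_word_mem[OF \<open>p > 0\<close>]) auto
  moreover have "card (perms_to {W1, W2}) = card (perms_to {W1}) + card (perms_to {W2})"
    if "W1 \<noteq> W2"
  proof -
    have "perms_to {W1, W2} = perms_to {W1} \<union> perms_to {W2}"
      and "perms_to {W1} \<inter> perms_to {W2} = {}"
      using that by (auto simp: perms_to_def)
    then show ?thesis
      using card_Un_disjoint[OF finite_perms_to finite_perms_to] by simp
  qed
  ultimately have "p dvd card (perms_to {W1}) + card (perms_to {W2})"
    by (cases "W1 = W2") (auto simp: insert_absorb)
  then have "(of_nat (card (perms_to {W1}) + card (perms_to {W2})) :: 'k) = 0"
    using \<open>CHAR('k) = p\<close> of_nat_eq_0_iff_char_dvd by blast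
  then show ?thesis
    by (simp add: S_poly_monom_w_coeff[OF \<open>p > 0\<close>] perms_to_def W1_def W2_def)
qed

end
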